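(* For $n\ge 2$, the path $P_n$ with $n$ vertices satisfies $\nu^*(P_n)=2n^2-2n-1$.
   Context: For a finite simple graph $G=(V,E)$ with $\ell=|V|+|E|$, a construction sequence (c-sequence) is a bijection $x:\{1,\dots,\ell\}\to V\sqcup E$ such that every edge $e=uw$ satisfies $x^{-1}(e)>\max\{x^{-1}(u),x^{-1}(w)\}$. The cost of $x$ is $\nu(x)=\sum_{e=uw\in E}\big(2x^{-1}(e)-x^{-1}(u)-x^{-1}(w)\big)$, and $\nu^*(G)$ is the maximum of $\nu(x)$ over all c-sequences for $G$. $P_n$ is the path with vertex set $\{1,\dots,n\}$ and edges $\{j,j+1\}$, $1\le j\le n-1$. *)

theory Defs
  imports Main
begin

text \<open>A finite simple graph is given by a vertex set V and a set E of 2-element subsets of V.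
  Elements of the disjoint union V \<sqcup> E are represented in the sum type.\<close>

definition simple_graph :: "'a set \<Rightarrow> 'a set set \<Rightarrow> bool" where
  "simple_graph V E \<longleftrightarrow> finite V \<and> (\<forall>e\<in>E. e \<subseteq> V \<and> card e = 2)"

definition elems :: "'a set \<Rightarrow> 'a set set \<Rightarrow> ('a + 'a set) set" where
  "elems V E = Inl ` V \<union> Inr ` E"

definition glen :: "'a set \<Rightarrow> 'a set set \<Rightarrow> nat" where
  "glen V E = card V + card E"

definition pos :: "'a set \<Rightarrow> 'a set set \<Rightarrow> (nat \<Rightarrow> 'a + 'a set) \<Rightarrow> ('a + 'a set) \<Rightarrow> nat" where
  "pos V E x a = inv_into {1..glen V E} x a"

definition cseq :: "'a set \<Rightarrow> 'a set set \<Rightarrow> (nat \<Rightarrow> 'a + 'a set) \<Rightarrow> bool" where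
  "cseq V E x \<longleftrightarrow> bij_betw x {1..glen V E} (elems V E) \<and>
     (\<forall>e\<in>E. \<forall>u\<in>e. pos V E x (Inr e) > pos V E x (Inl u))"

definition cost :: "'a set \<Rightarrow> 'a set set \<Rightarrow> (nat \<Rightarrow> 'a + 'a set) \<Rightarrow> int" where
  "cost V E x = (\<Sum>e\<in>E. 2 * int (pos V E x (Inr e)) - (\<Sum>u\<in>e. int (pos V E x (Inl u))))"

definition nu_star :: "'a set \<Rightarrow> 'a set set \<Rightarrow> int" where
  "nu_star V E = Max {cost V E x | x. cseq V E x}"

definition path_V :: "nat \<Rightarrow> nat set" where
  "path_V n = {1..n}"

definition path_E :: "nat \<Rightarrow> nat set set" where
  "path_E n = {{j, j + 1} | j. 1 \<le> j \<and> j \<le> n - 1}"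

end

theory Submission
  imports Defs
begin

(* Every element of V \<union> E occupies one of the positions 1, ..., L, so the positions add up to
   L(L + 1)/2 with L = 2n - 1. Since the inner vertices of P_n have degree 2 and the leaves 1, n
   degree 1, the cost of a c-sequence with vertex positions p is therefore
   L(L + 1) - 4 (p 1 + ... + p n) + p 1 + p n.
   The vertex positions are distinct positive integers, so p 1 + ... + p n >= n(n + 1)/2 and the
   inner ones sum to at least (n - 2)(n - 1)/2; this gives the bound. Equality holds when the inner
   vertices come first, then the two leaves, then all edges. *)

lemma card_mul_Suc_le_double_sum:
  fixes X :: "nat set"
  assumes "finite X" and "0 \<notin> X"
  shows "card X * (card X + 1) \<le> 2 * \<Sum>X"
  using assms
proof (induction X rule: finite_linorder_max_induct)
  case empty
  show ?case by simp
next
  case (insert b A)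
  have "A \<subseteq> {1..<b}"
  proof
    fix a assume "a \<in> A"
    then show "a \<in> {1..<b}"
      using insert.hyps(2) insert.prems by (cases a) auto
  qed
  then have "card A \<le> b - 1"
    using card_mono[of "{1..<b}" A] by simp
  moreover have "0 < b" and "b \<notin> A"
    using insert.hyps(2) insert.prems by (auto intro: gr0I)
  ultimately show ?case
    using insert by (simp add: algebra_simps)
qed

lemma sum_elems:
  assumes "finite V" and "finite E"
  shows "sum f (elems V E) = (\<Sum>v\<in>V. f (Inl v)) + (\<Sum>e\<in>E. f (Inr e))"
  unfolding elems_def using assms
  by (subst sum.union_disjoint) (auto simp: sum.reindex)

lemma bij_betw_pos:
  assumes "bij_betw x {1..glen V E} (elems V E)"
  shows "bij_betw (pos V E x) (elems V E) {1..glen V E}"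
  unfolding pos_def using assms by (rule bij_betw_inv_into)

lemma sum_pos_elems:
  assumes "bij_betw x {1..glen V E} (elems V E)"
  shows "sum (pos V E x) (elems V E) = \<Sum>{1..glen V E}"
  using sum.reindex_bij_betw[OF bij_betw_pos[OF assms], of id] by simp

lemma card_mul_Suc_le_double_sum_pos:
  assumes "bij_betw x {1..glen V E} (elems V E)" and "W \<subseteq> V" and "finite W"
  shows "int (card W) * (int (card W) + 1) \<le> 2 * (\<Sum>v\<in>W. int (pos V E x (Inl v)))"
proof -
  have W_elems: "Inl ` W \<subseteq> elems V E"
    using assms(2) by (auto simp: elems_def)
  have inj: "inj_on (\<lambda>v. pos V E x (Inl v)) W"
    using bij_betw_pos[OF assms(1)] W_elems unfolding bij_betw_def inj_on_def by blast
  have "0 \<notin> (\<lambda>v. pos V E x (Inl v)) ` W"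
    using bij_betw_pos[OF assms(1)] W_elems by (fastforce simp: bij_betw_def)
  then have "card W * (card W + 1) \<le> 2 * (\<Sum>v\<in>W. pos V E x (Inl v))"
    using card_mul_Suc_le_double_sum[of "(\<lambda>v. pos V E x (Inl v)) ` W"] assms(3)
    by (simp add: card_image[OF inj] sum.reindex[OF inj])
  then show ?thesis
    by (metis (mono_tags) of_nat_le_iff of_nat_sum of_nat_mult of_nat_add of_nat_1 of_nat_numeral)
qed

lemma cost_nonneg:
  assumes "simple_graph V E" and "cseq V E x"
  shows "0 \<le> cost V E x"
  unfolding cost_def
proof (rule sum_nonneg)
  fix e assume e: "e \<in> E"
  then have "card e = 2"
    using assms(1) by (simp add: simple_graph_def)
  have "pos V E x (Inl u) < pos V E x (Inr e)" if "u \<in> e" for u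
    using assms(2) e that unfolding cseq_def by blast
  then have "(\<Sum>u\<in>e. int (pos V E x (Inl u))) \<le> (\<Sum>u\<in>e. int (pos V E x (Inr e)))"
    by (intro sum_mono) (simp add: less_imp_le)
  also have "\<dots> = 2 * int (pos V E x (Inr e))"
    using \<open>card e = 2\<close> by simp
  finally show "0 \<le> 2 * int (pos V E x (Inr e)) - (\<Sum>u\<in>e. int (pos V E x (Inl u)))"
    by simp
qed

lemma nu_star_eqI:
  assumes "simple_graph V E"
    and le: "\<And>x. cseq V E x \<Longrightarrow> cost V E x \<le> b"
    and "cseq V E x\<^sub>0" and "cost V E x\<^sub>0 = b"
  shows "nu_star V E = b"
  unfolding nu_star_def
proof (rule Max_eqI)
  show "finite {cost V E x |x. cseq V E x}"
    by (rule finite_subset[of _ "{0..b}"]) (auto simp: le cost_nonneg[OF assms(1)])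
qed (use assms in auto)

lemma pos_inv_into:
  assumes "bij_betw r (elems V E) {1..glen V E}" and "a \<in> elems V E"
  shows "pos V E (inv_into (elems V E) r) a = r a"
  unfolding pos_def using assms by (rule inv_into_inv_into_eq)

lemma cseq_inv_into:
  assumes "bij_betw r (elems V E) {1..glen V E}"
    and "\<And>e u. e \<in> E \<Longrightarrow> u \<in> e \<Longrightarrow> r (Inl u) < r (Inr e)"
    and "simple_graph V E"
  shows "cseq V E (inv_into (elems V E) r)"
proof -
  have "Inl u \<in> elems V E" "Inr e \<in> elems V E" if "e \<in> E" "u \<in> e" for e u
    using that assms(3) by (auto simp: elems_def simple_graph_def)
  then show ?thesis
    unfolding cseq_def using assms(1,2) by (simp add: bij_betw_inv_into pos_inv_into)
qed

lemma inj_on_path_edge: "inj_on (\<lambda>j::nat. {j, j + 1}) A"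
  by (auto simp: inj_on_def doubleton_eq_iff)

lemma path_E_eq_image: "path_E n = (\<lambda>j. {j, j + 1}) ` {1..n - 1}"
  by (auto simp: path_E_def)

lemma card_path_E: "card (path_E n) = n - 1"
  using card_image[OF inj_on_path_edge, of "{1..n - 1}"] by (simp add: path_E_eq_image)

lemma glen_path: "1 \<le> n \<Longrightarrow> glen (path_V n) (path_E n) = 2 * n - 1"
  by (simp add: glen_def path_V_def card_path_E)

lemma simple_graph_path: "simple_graph (path_V n) (path_E n)"
  by (auto simp: simple_graph_def path_V_def path_E_eq_image)

lemma sum_path_V_split:
  fixes n :: nat
  assumes "2 \<le> n"
  shows "sum f {1..n} = f 1 + f n + sum f {2..n - 1}"
proof -
  have "{1..n} = insert 1 (insert n {2..n - 1})"
    using assms by auto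
  with assms show ?thesis
    by (simp add: add.assoc)
qed

lemma sum_path_E_endpoints:
  fixes f :: "nat \<Rightarrow> 'a::comm_ring_1"
  assumes "1 \<le> n"
  shows "(\<Sum>e\<in>path_E n. \<Sum>u\<in>e. f u) = 2 * sum f {1..n} - f 1 - f n"
proof -
  obtain m where n: "n = m + 1"
    using assms by (metis add.commute le_Suc_ex)
  have "(\<Sum>e\<in>path_E n. \<Sum>u\<in>e. f u) = (\<Sum>j = 1..m. f j + f (j + 1))"
    unfolding n path_E_eq_image by (subst sum.reindex[OF inj_on_path_edge]) simp
  also have "\<dots> = 2 * sum f {1..m + 1} - f 1 - f (m + 1)"
    by (induction m) (simp_all add: algebra_simps)
  finally show ?thesis
    by (simp add: n)
qed

lemma cost_path:
  assumes "1 \<le> n"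
    and bij: "bij_betw x {1..glen (path_V n) (path_E n)} (elems (path_V n) (path_E n))"
  defines "p \<equiv> \<lambda>v. int (pos (path_V n) (path_E n) x (Inl v))"
  shows "cost (path_V n) (path_E n) x = 2 * int n * (2 * int n - 1) - 4 * sum p {1..n} + p 1 + p n"
proof -
  let ?q = "\<lambda>e. int (pos (path_V n) (path_E n) x (Inr e))"
  have fin: "finite (path_V n)" "finite (path_E n)"
    using simple_graph_path[of n] by (auto simp: simple_graph_def path_V_def path_E_eq_image)
  have "sum p {1..n} + sum ?q (path_E n)
      = int (sum (pos (path_V n) (path_E n) x) (elems (path_V n) (path_E n)))"
    unfolding of_nat_sum sum_elems[OF fin] by (simp add: p_def path_V_def)
  also have "\<dots> = (\<Sum>i = Suc 0..2 * n - 1. int i)"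
    using sum_pos_elems[OF bij] glen_path[OF assms(1)] by (simp add: of_nat_sum)
  finally have total: "sum p {1..n} + sum ?q (path_E n) = int n * (2 * int n - 1)"
    using double_gauss_sum_from_Suc_0[of "2 * n - 1", where ?'a = int] assms(1)
    by (simp add: of_nat_diff algebra_simps)
  have "cost (path_V n) (path_E n) x = 2 * sum ?q (path_E n) - (\<Sum>e\<in>path_E n. \<Sum>u\<in>e. p u)"
    by (simp add: cost_def p_def sum_subtractf sum_distrib_left)
  also have "\<dots> = 2 * sum ?q (path_E n) - (2 * sum p {1..n} - p 1 - p n)"
    using sum_path_E_endpoints[OF assms(1), of p] by simp
  finally show ?thesis
    using total by linarith
qed

lemma cost_path_le:
  assumes "2 \<le> n" and "cseq (path_V n) (path_E n) x"
  shows "cost (path_V n) (path_E n) x \<le> 2 * int n ^ 2 - 2 * int n - 1"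
proof -
  define p where "p v = int (pos (path_V n) (path_E n) x (Inl v))" for v
  define S where "S = sum p {1..n}"
  define S\<^sub>i\<^sub>n where "S\<^sub>i\<^sub>n = sum p {2..n - 1}"
  have bij: "bij_betw x {1..glen (path_V n) (path_E n)} (elems (path_V n) (path_E n))"
    using assms(2) by (simp add: cseq_def)
  have vertex_sum: "int n * (int n + 1) \<le> 2 * S"
    using card_mul_Suc_le_double_sum_pos[OF bij, of "{1..n}"] by (simp add: S_def p_def path_V_def)
  have interior: "{2..n - 1} \<subseteq> path_V n"
    by (auto simp: path_V_def)
  have inner_sum: "(int n - 2) * (int n - 1) \<le> 2 * S\<^sub>i\<^sub>n"
    using card_mul_Suc_le_double_sum_pos[OF bij interior] assms(1)
    by (simp add: S\<^sub>i\<^sub>n_def p_def of_nat_diff)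
  have "cost (path_V n) (path_E n) x = 2 * int n * (2 * int n - 1) - 4 * S + p 1 + p n"
    using cost_path[OF _ bij] assms(1) by (simp add: S_def p_def)
  also have "\<dots> = 2 * int n * (2 * int n - 1) - 3 * S - S\<^sub>i\<^sub>n"
    using sum_path_V_split[OF assms(1), of p] by (simp add: S_def S\<^sub>i\<^sub>n_def)
  finally have cost_eq:
    "cost (path_V n) (path_E n) x = 2 * int n * (2 * int n - 1) - 3 * S - S\<^sub>i\<^sub>n" .
  show ?thesis
    using vertex_sum inner_sum unfolding cost_eq by (simp add: algebra_simps power2_eq_square)
qed

definition path_rank :: "nat \<Rightarrow> nat + nat set \<Rightarrow> nat" where
  "path_rank n = case_sum (\<lambda>v. if v = 1 then n - 1 else if v = n then n else v - 1) (\<lambda>e. n + Min e)"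

lemma bij_betw_path_rank:
  assumes "2 \<le> n"
  shows "bij_betw (path_rank n) (elems (path_V n) (path_E n)) {1..glen (path_V n) (path_E n)}"
proof -
  obtain m where n: "n = m + 2"
    using assms by (metis add.commute le_Suc_ex)
  define unrank :: "nat \<Rightarrow> nat + nat set" where
    "unrank k = (if k \<le> m then Inl (k + 1) else if k = m + 1 then Inl 1
       else if k = m + 2 then Inl (m + 2) else Inr {k - (m + 2), k - (m + 2) + 1})" for k
  have elems: "elems (path_V n) (path_E n) = Inl ` {1..m + 2} \<union> Inr ` (\<lambda>j. {j, j + 1}) ` {1..m + 1}"
    by (simp add: elems_def path_V_def path_E_eq_image n)
  have glen: "glen (path_V n) (path_E n) = 2 * m + 3"
    by (simp add: glen_path n)
  show ?thesis
  proof (rule bij_betw_byWitness[where f' = unrank])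
    show "\<forall>a\<in>elems (path_V n) (path_E n). unrank (path_rank n a) = a"
    proof
      fix a
      assume "a \<in> elems (path_V n) (path_E n)"
      then consider (vertex) v where "a = Inl v" and "v \<in> {1..m + 2}"
        | (edge) j where "a = Inr {j, j + 1}" and "j \<in> {1..m + 1}"
        unfolding elems by blast
      then show "unrank (path_rank n a) = a"
      proof cases
        case vertex
        then show ?thesis
          by (cases "v = 1"; cases "v = m + 2") (auto simp: unrank_def path_rank_def n)
      next
        case edge
        then show ?thesis
          by (simp add: unrank_def path_rank_def n)
      qed
    qed
    show "\<forall>k\<in>{1..glen (path_V n) (path_E n)}. path_rank n (unrank k) = k"
      unfolding glen by (auto simp: unrank_def path_rank_def n)
    show "path_rank n ` elems (path_V n) (path_E n) \<subseteq> {1..glen (path_V n) (path_E n)}"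
      unfolding elems glen by (auto simp: path_rank_def n)
    show "unrank ` {1..glen (path_V n) (path_E n)} \<subseteq> elems (path_V n) (path_E n)"
    proof (rule image_subsetI)
      fix k
      assume k: "k \<in> {1..glen (path_V n) (path_E n)}"
      show "unrank k \<in> elems (path_V n) (path_E n)"
      proof (cases "k \<le> m + 2")
        case True
        then show ?thesis
          using k unfolding elems by (auto simp: unrank_def)
      next
        case False
        then have "k - (m + 2) \<in> {1..m + 1}"
          using k glen by auto
        then show ?thesis
          using False unfolding elems by (auto simp: unrank_def)
      qed
    qed
  qed
qed

lemma cseq_path_rank:
  assumes "2 \<le> n"
  shows "cseq (path_V n) (path_E n) (inv_into (elems (path_V n) (path_E n)) (path_rank n))"
proof (rule cseq_inv_into[OF bij_betw_path_rank[OF assms] _ simple_graph_path])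
  fix e u
  assume "e \<in> path_E n" and "u \<in> e"
  then obtain j where e: "e = {j, j + 1}" and "1 \<le> j" and "j < n" and "u \<le> n"
    by (auto simp: path_E_eq_image)
  then have "path_rank n (Inl u) \<le> n"
    by (auto simp: path_rank_def)
  also have "n < path_rank n (Inr e)"
    using \<open>1 \<le> j\<close> by (simp add: path_rank_def e)
  finally show "path_rank n (Inl u) < path_rank n (Inr e)" .
qed

lemma cost_path_rank:
  assumes "2 \<le> n"
  shows "cost (path_V n) (path_E n) (inv_into (elems (path_V n) (path_E n)) (path_rank n))
    = 2 * int n ^ 2 - 2 * int n - 1"
proof -
  let ?x = "inv_into (elems (path_V n) (path_E n)) (path_rank n)"
  define p where "p v = int (pos (path_V n) (path_E n) ?x (Inl v))" for v
  have p: "p v = int (path_rank n (Inl v))" if "v \<in> {1..n}" for v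
    using pos_inv_into[OF bij_betw_path_rank[OF assms]] that
    by (simp add: p_def elems_def path_V_def)
  have "sum p {2..n - 1} = (\<Sum>v = 2..n - 1. int (v - 1))"
    by (rule sum.cong) (auto simp: p path_rank_def)
  also have "\<dots> = (\<Sum>i = 1..n - 2. int i)"
    using sum.shift_bounds_cl_nat_ivl[of "\<lambda>v. int (v - 1)" 1 1 "n - 2"] assms
    by (simp add: numeral_2_eq_2 Suc_diff_Suc)
  finally have "2 * sum p {2..n - 1} = (int n - 2) * (int n - 1)"
    using double_gauss_sum_from_Suc_0[of "n - 2", where ?'a = int] assms by (simp add: of_nat_diff)
  moreover have "p 1 = int n - 1" and "p n = int n"
    using assms by (simp_all add: p path_rank_def of_nat_diff)
  moreover have
    "cost (path_V n) (path_E n) ?x = 2 * int n * (2 * int n - 1) - 4 * sum p {1..n} + p 1 + p n"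
    using cost_path[of n ?x] bij_betw_inv_into[OF bij_betw_path_rank[OF assms]] assms
    by (simp add: p_def)
  ultimately show ?thesis
    using sum_path_V_split[OF assms, of p] by (simp add: algebra_simps power2_eq_square)
qed

theorem theorem3:
  fixes n :: nat
  assumes "n \<ge> 2"
  shows "nu_star (path_V n) (path_E n) = 2 * int n ^ 2 - 2 * int n - 1"
proof (rule nu_star_eqI[OF simple_graph_path])
  show "cost (path_V n) (path_E n) x \<le> 2 * int n ^ 2 - 2 * int n - 1"
    if "cseq (path_V n) (path_E n) x" for x
    using cost_path_le[OF assms that] .
  show "cseq (path_V n) (path_E n) (inv_into (elems (path_V n) (path_E n)) (path_rank n))"
    using cseq_path_rank[OF assms] .
  show "cost (path_V n) (path_E n) (inv_into (elems (path_V n) (path_E n)) (path_rank n))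
      = 2 * int n ^ 2 - 2 * int n - 1"
    using cost_path_rank[OF assms] .
qed

end
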